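(* Let $\Omega_n=\dfrac{\pi^{n/2}}{\Gamma\left(\frac n2+1\right)}$ for $n\in\mathbb{N}_0$, and \[ a(n)=\frac12\ln\frac{n}{2\pi}+\frac1{4n}-\frac1{24n^3}+\frac1{20n^5}-\frac{17}{112n^7},\qquad b(n)=a(n)+\frac{31}{36n^9}. \] Then for every $n\in\mathbb{N}$, \[ a(n)<\ln\frac{\Omega_{n-1}}{\Omega_n}<b(n). \]
   Context: $\Omega_n$ is the volume of the unit ball in $\mathbb{R}^n$ ($\Omega_0=1$); $\Gamma$ is Euler's gamma function. *)

theory Defs
  imports "HOL-Analysis.Analysis"
begin

definition unit_ball_vol :: "nat \<Rightarrow> real" where
  "unit_ball_vol n = pi powr (real n / 2) / Gamma (real n / 2 + 1)"

definition a_lower :: "nat \<Rightarrow> real" where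
  "a_lower n = 1/2 * ln (real n / (2 * pi)) + 1 / (4 * real n) - 1 / (24 * real n ^ 3)
     + 1 / (20 * real n ^ 5) - 17 / (112 * real n ^ 7)"

definition b_upper :: "nat \<Rightarrow> real" where
  "b_upper n = a_lower n + 31 / (36 * real n ^ 9)"

end

theory Submission
  imports Defs "HOL-Real_Asymp.Real_Asymp"
begin

text \<open>
  Put \<open>R x = ln (\<Gamma>(x + 1)) - ln (\<Gamma>(x + 1/2))\<close>, so that
  \<open>ln (\<Omega>(n - 1) / \<Omega>(n)) = R (n/2) - ln \<pi> / 2\<close>.
  The functional equation of \<open>\<Gamma>\<close> gives \<open>R x + R (x + 1/2) = ln (x + 1/2)\<close> and
  log-convexity gives \<open>R x \<le> R (x + 1/2)\<close>; hence \<open>R x - ln x / 2\<close> lies between \<open>0\<close> and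
  \<open>ln (1 + 1/(2x)) / 2\<close>, and it drops by exactly \<open>ln (1 + 1/(4x(x + 1))) / 2\<close> from
  \<open>x\<close> to \<open>x + 1\<close>. Comparing this drop with the Taylor polynomials of \<open>ln (1 + t)\<close>
  of degree 4 and 5 shows that the differences between \<open>R x\<close> and the two claimed
  bounds (with \<open>n = 2x\<close>) decrease strictly under \<open>x \<mapsto> x + 1\<close>. Since these
  differences are asymptotically nonnegative, they are positive everywhere.
\<close>

definition ln_one_plus_taylor :: "nat \<Rightarrow> real \<Rightarrow> real" where
  "ln_one_plus_taylor n t = (\<Sum>k<n. (-1) ^ k * t ^ (k + 1) / (k + 1))"

lemma ln_one_plus_taylor_remainder_sign:
  fixes t :: real
  assumes "t \<ge> 0"
  shows "0 \<le> (-1) ^ n * (ln (1 + t) - ln_one_plus_taylor n t)"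
proof -
  define f where "f u = (-1) ^ n * (ln (1 + u) - ln_one_plus_taylor n u)" for u :: real
  have "f 0 \<le> f t"
  proof (rule DERIV_nonneg_imp_nondecreasing[OF assms])
    fix x :: real assume x: "0 \<le> x" "x \<le> t"
    have summand: "((\<lambda>u. (-1) ^ k * u ^ (k + 1) / (k + 1)) has_real_derivative (-x) ^ k) (at x)"
      for k :: nat
    proof -
      have "((\<lambda>u. (-1) ^ k / (k + 1) * u ^ Suc k) has_real_derivative
              (-1) ^ k / (k + 1) * (real (Suc k) * x ^ k)) (at x)"
        by (intro DERIV_cmult) (use DERIV_pow[of "Suc k" x] in simp)
      moreover have "(-1) ^ k / (k + 1) * (real (Suc k) * x ^ k) = (-x) ^ k"
        by (simp add: power_minus')
      ultimately show ?thesis by simp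
    qed
    have "(ln_one_plus_taylor n has_real_derivative (\<Sum>k<n. (-x) ^ k)) (at x)"
      unfolding ln_one_plus_taylor_def[abs_def] by (rule DERIV_sum) (rule summand)
    moreover have "((\<lambda>u. ln (1 + u)) has_real_derivative 1 / (1 + x)) (at x)"
      using x by (auto intro!: derivative_eq_intros)
    ultimately have "(f has_real_derivative (-1) ^ n * (1 / (1 + x) - (\<Sum>k<n. (-x) ^ k))) (at x)"
      unfolding f_def by (intro DERIV_cmult DERIV_diff)
    also have "(-1) ^ n * (1 / (1 + x) - (\<Sum>k<n. (-x) ^ k)) = x ^ n / (1 + x)"
    proof -
      have "(\<Sum>k<n. (-x) ^ k) = (1 - (-x) ^ n) / (1 + x)"
        using x by (simp add: sum_gp_strict)
      then show ?thesis
        using x by (simp add: diff_divide_distrib power_mult_distrib[symmetric])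
    qed
    finally show "\<exists>y. (f has_real_derivative y) (at x) \<and> 0 \<le> y"
      using x by auto
  qed
  then show ?thesis by (simp add: f_def ln_one_plus_taylor_def)
qed

lemma ln_one_plus_taylor_le:
  assumes "t \<ge> 0" "even n"
  shows "ln_one_plus_taylor n t \<le> ln (1 + t)"
  using ln_one_plus_taylor_remainder_sign[OF assms(1), of n] assms(2) by simp

lemma ln_one_plus_taylor_ge:
  assumes "t \<ge> 0" "odd n"
  shows "ln (1 + t) \<le> ln_one_plus_taylor n t"
  using ln_one_plus_taylor_remainder_sign[OF assms(1), of n] assms(2) by simp
lemma pos_of_decreasing_unit_step:
  fixes f g :: "real \<Rightarrow> real"
  assumes dec: "\<And>x. x > 0 \<Longrightarrow> f (x + 1) < f x"
    and lim: "(g \<longlongrightarrow> 0) at_top"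
    and lb: "\<forall>\<^sub>F x in at_top. g x \<le> f x"
    and "x > 0"
  shows "f x > 0"
proof (rule ccontr)
  assume "\<not> f x > 0"
  with dec[OF \<open>x > 0\<close>] have neg: "f (x + 1) < 0" by linarith
  have dec_iter: "f (y + real k) \<le> f y" if "y > 0" for y k
  proof (induction k)
    case (Suc k)
    have "f (y + real k + 1) < f (y + real k)" using dec[of "y + real k"] that by simp
    with Suc show ?case by (simp add: algebra_simps)
  qed simp
  have "\<forall>\<^sub>F y in at_top. f (x + 1) < g y \<and> g y \<le> f y"
    using order_tendstoD(1)[OF lim neg] lb by eventually_elim simp
  then obtain N where N: "\<And>y. y \<ge> N \<Longrightarrow> f (x + 1) < g y \<and> g y \<le> f y"
    by (auto simp: eventually_at_top_linorder)
  define y where "y = x + 1 + real (nat \<lceil>N\<rceil>)"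
  have "y \<ge> N" using \<open>x > 0\<close> unfolding y_def by linarith
  with N have "f (x + 1) < f y" by fastforce
  moreover have "f y \<le> f (x + 1)" unfolding y_def using \<open>x > 0\<close> by (intro dec_iter) simp
  ultimately show False by simp
qed

lemma ln_Gamma_real_plus1:
  fixes x :: real
  assumes "x > 0"
  shows "ln (Gamma (x + 1)) = ln x + ln (Gamma x)"
proof -
  have "x \<notin> \<int>\<^sub>\<le>\<^sub>0" using assms by (auto elim!: nonpos_Ints_cases)
  then have "Gamma (x + 1) = x * Gamma x" by (rule Gamma_plus1)
  then show ?thesis using assms Gamma_real_pos[OF assms] by (simp add: ln_mult_pos)
qed

definition ln_Gamma_half_ratio :: "real \<Rightarrow> real" where
  "ln_Gamma_half_ratio x = ln (Gamma (x + 1)) - ln (Gamma (x + 1/2))"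

lemma ln_Gamma_half_ratio_add_half:
  assumes "x > -1/2"
  shows "ln_Gamma_half_ratio x + ln_Gamma_half_ratio (x + 1/2) = ln (x + 1/2)"
  using ln_Gamma_real_plus1[of "x + 1/2"] assms
  by (simp add: ln_Gamma_half_ratio_def add.assoc)

lemma ln_Gamma_half_ratio_le_add_half:
  assumes "x > -1/2"
  shows "ln_Gamma_half_ratio x \<le> ln_Gamma_half_ratio (x + 1/2)"
proof -
  have "(ln \<circ> Gamma) ((1 - 1/2) *\<^sub>R (x + 1/2) + (1/2) *\<^sub>R (x + 3/2))
      \<le> (1 - 1/2) * (ln \<circ> Gamma) (x + 1/2) + (1/2) * (ln \<circ> Gamma) (x + 3/2)"
    using assms by (intro convex_onD[OF log_convex_Gamma_real]) auto
  moreover have "(1 - 1/2) *\<^sub>R (x + 1/2) + (1/2) *\<^sub>R (x + 3/2) = x + 1"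
    by (simp add: field_simps)
  ultimately show ?thesis
    by (simp add: ln_Gamma_half_ratio_def add.assoc)
qed

lemma ln_Gamma_half_ratio_bounds:
  assumes "x > 0"
  shows "ln x / 2 \<le> ln_Gamma_half_ratio x" "ln_Gamma_half_ratio x \<le> ln (x + 1/2) / 2"
proof -
  show "ln x / 2 \<le> ln_Gamma_half_ratio x"
    using ln_Gamma_half_ratio_add_half[of "x - 1/2"] ln_Gamma_half_ratio_le_add_half[of "x - 1/2"]
      assms by simp
  show "ln_Gamma_half_ratio x \<le> ln (x + 1/2) / 2"
    using ln_Gamma_half_ratio_add_half[of x] ln_Gamma_half_ratio_le_add_half[of x] assms by simp
qed

lemma ln_Gamma_half_ratio_step:
  assumes "x > 0"
  shows "(ln_Gamma_half_ratio x - ln x / 2) - (ln_Gamma_half_ratio (x + 1) - ln (x + 1) / 2)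
    = ln (1 + 1 / (2 * x * (2 * x + 2))) / 2"
proof -
  have "ln_Gamma_half_ratio x - ln_Gamma_half_ratio (x + 1) = ln (x + 1/2) - ln (x + 1)"
    using ln_Gamma_half_ratio_add_half[of x] ln_Gamma_half_ratio_add_half[of "x + 1/2"] assms
    by (simp add: add.assoc)
  moreover have "1 + 1 / (2 * x * (2 * x + 2)) = (x + 1/2)^2 / (x * (x + 1))"
    using assms by (simp add: divide_simps power2_eq_square) (simp add: algebra_simps)
  then have "ln (1 + 1 / (2 * x * (2 * x + 2))) = 2 * ln (x + 1/2) - ln x - ln (x + 1)"
    using assms by (simp add: ln_div ln_mult ln_realpow)
  ultimately show ?thesis by simp
qed

definition a_series :: "real \<Rightarrow> real" where
  "a_series m = 1 / (4 * m) - 1 / (24 * m ^ 3) + 1 / (20 * m ^ 5) - 17 / (112 * m ^ 7)"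

text \<open>Clearing denominators leaves numerators with positive coefficients only.\<close>

lemma a_series_step_lower:
  fixes m t :: real
  assumes "m > 0" "t = 1 / (m * (m + 2))"
  shows "a_series m - a_series (m + 2) < ln_one_plus_taylor 4 t / 2"
proof -
  have "ln_one_plus_taylor 4 t / 2 - (a_series m - a_series (m + 2))
      = (136/7 + 68 * m + 478/5 * m^2 + 308/5 * m^3 + 77/5 * m^4) / (m^7 * (m + 2)^7)"
    using assms
    by (simp add: ln_one_plus_taylor_def numeral_eq_Suc a_series_def divide_simps) algebra
  moreover have "\<dots> > 0" using assms by (intro divide_pos_pos add_pos_pos) auto
  ultimately show ?thesis by linarith
qed

lemma a_series_step_upper:
  fixes m t :: real
  assumes "m > 0" "t = 1 / (m * (m + 2))"
  shows "ln_one_plus_taylor 5 t / 2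
    < a_series m - a_series (m + 2) + (31 / (36 * m ^ 9) - 31 / (36 * (m + 2) ^ 9))"
proof -
  have "a_series m - a_series (m + 2) + (31 / (36 * m ^ 9) - 31 / (36 * (m + 2) ^ 9))
        - ln_one_plus_taylor 5 t / 2
      = (3968/9 + 1984 * m + 27232/7 * m^2 + 89872/21 * m^3 + 19576/7 * m^4 + 1036 * m^5
          + 518/3 * m^6) / (m^9 * (m + 2)^9)"
    using assms
    by (simp add: ln_one_plus_taylor_def numeral_eq_Suc a_series_def divide_simps) algebra
  moreover have "\<dots> > 0" using assms by (intro divide_pos_pos add_pos_pos) auto
  ultimately show ?thesis by linarith
qed

lemma ln_Gamma_half_ratio_gt:
  assumes "x > 0"
  shows "ln x / 2 + a_series (2 * x) < ln_Gamma_half_ratio x"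
proof -
  define f where "f u = ln_Gamma_half_ratio u - ln u / 2 - a_series (2 * u)" for u
  have "f (y + 1) < f y" if "y > 0" for y
  proof -
    define t where "t = 1 / (2 * y * (2 * y + 2))"
    have "t \<ge> 0" using that by (simp add: t_def)
    then have "ln_one_plus_taylor 4 t \<le> ln (1 + t)" by (simp add: ln_one_plus_taylor_le)
    moreover have "a_series (2 * y) - a_series (2 * y + 2) < ln_one_plus_taylor 4 t / 2"
      using that by (intro a_series_step_lower) (simp_all add: t_def)
    moreover note ln_Gamma_half_ratio_step[OF that, folded t_def]
    moreover have "2 * (y + 1) = 2 * y + 2" by simp
    ultimately show ?thesis unfolding f_def by simp
  qed
  moreover have "((\<lambda>x. - a_series (2 * x)) \<longlongrightarrow> 0) at_top"
    unfolding a_series_def by real_asymp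
  moreover have "\<forall>\<^sub>F x in at_top. - a_series (2 * x) \<le> f x"
    using eventually_gt_at_top[of 0]
    by eventually_elim (use ln_Gamma_half_ratio_bounds(1) in \<open>force simp: f_def\<close>)
  ultimately have "f x > 0" using assms by (rule pos_of_decreasing_unit_step)
  then show ?thesis by (simp add: f_def)
qed

lemma ln_Gamma_half_ratio_lt:
  assumes "x > 0"
  shows "ln_Gamma_half_ratio x < ln x / 2 + a_series (2 * x) + 31 / (36 * (2 * x) ^ 9)"
proof -
  define f where
    "f u = ln u / 2 + a_series (2 * u) + 31 / (36 * (2 * u) ^ 9) - ln_Gamma_half_ratio u" for u
  define g where
    "g u = ln u / 2 - ln (u + 1/2) / 2 + a_series (2 * u) + 31 / (36 * (2 * u) ^ 9)" for u
  have "f (y + 1) < f y" if "y > 0" for y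
  proof -
    define t where "t = 1 / (2 * y * (2 * y + 2))"
    have "t \<ge> 0" using that by (simp add: t_def)
    then have "ln (1 + t) \<le> ln_one_plus_taylor 5 t" by (simp add: ln_one_plus_taylor_ge)
    moreover have "ln_one_plus_taylor 5 t / 2
        < a_series (2 * y) - a_series (2 * y + 2)
          + (31 / (36 * (2 * y) ^ 9) - 31 / (36 * (2 * y + 2) ^ 9))"
      using that by (intro a_series_step_upper) (simp_all add: t_def)
    moreover note ln_Gamma_half_ratio_step[OF that, folded t_def]
    moreover have "2 * (y + 1) = 2 * y + 2" by simp
    ultimately show ?thesis unfolding f_def by simp
  qed
  moreover have "(g \<longlongrightarrow> 0) at_top"
    unfolding g_def a_series_def by real_asymp
  moreover have "\<forall>\<^sub>F x in at_top. g x \<le> f x"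
    using eventually_gt_at_top[of 0]
    by eventually_elim (use ln_Gamma_half_ratio_bounds(2) in \<open>force simp: f_def g_def\<close>)
  ultimately have "f x > 0" using assms by (rule pos_of_decreasing_unit_step)
  then show ?thesis by (simp add: f_def)
qed

lemma ln_unit_ball_vol: "ln (unit_ball_vol n) = real n / 2 * ln pi - ln (Gamma (real n / 2 + 1))"
proof -
  have "Gamma (real n / 2 + 1) > 0" by (rule Gamma_real_pos) simp
  then have "Gamma (real n / 2 + 1) \<noteq> 0" by linarith
  then show ?thesis unfolding unit_ball_vol_def by (simp add: ln_div ln_powr)
qed

lemma ln_unit_ball_vol_ratio:
  assumes "n \<ge> 1"
  shows "ln (unit_ball_vol (n - 1) / unit_ball_vol n) = ln_Gamma_half_ratio (real n / 2) - ln pi / 2"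
proof -
  have "unit_ball_vol m \<noteq> 0" for m
    unfolding unit_ball_vol_def by (simp add: Gamma_real_pos less_imp_neq[symmetric])
  then have "ln (unit_ball_vol (n - 1) / unit_ball_vol n)
      = ln (unit_ball_vol (n - 1)) - ln (unit_ball_vol n)"
    by (simp add: ln_div)
  also have "\<dots> = ln_Gamma_half_ratio (real n / 2) - ln pi / 2"
    using assms by (simp add: ln_unit_ball_vol ln_Gamma_half_ratio_def of_nat_diff field_simps)
  finally show ?thesis .
qed

theorem theorem7:
  fixes n :: nat
  assumes "n \<ge> 1"
  shows "a_lower n < ln (unit_ball_vol (n - 1) / unit_ball_vol n)
       \<and> ln (unit_ball_vol (n - 1) / unit_ball_vol n) < b_upper n"
proof -
  define x where "x = real n / 2"
  have "x > 0" using assms by (simp add: x_def)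
  have "a_lower n = ln x / 2 - ln pi / 2 + a_series (2 * x)"
    using assms by (simp add: a_lower_def a_series_def x_def ln_div ln_mult_pos)
  moreover have "b_upper n = a_lower n + 31 / (36 * (2 * x) ^ 9)"
    by (simp add: b_upper_def x_def)
  moreover note ln_unit_ball_vol_ratio[OF assms, folded x_def]
    ln_Gamma_half_ratio_gt[OF \<open>x > 0\<close>] ln_Gamma_half_ratio_lt[OF \<open>x > 0\<close>]
  ultimately show ?thesis by linarith
qed

end
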